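(* Let $a,b,c,p\in\mathbb{C}$ with $-c\notin\mathbb{N}\cup\{0\}$. Suppose that \[ \sinh(pz)F(a,b;c;z)=\sum_{n=0}^\infty\frac{u_n-v_n}{2}z^n,\qquad |z|<1, \] where $u_n,v_n$ are given as follows: $u_0=1$, $u_1=\frac{ab}{c}+p$, $u_2=\frac{a(1+a)b(1+b)}{2c(1+c)}+\frac{abp}{c}+\frac{p^2}{2}$, $v_0=1$, $v_1=\frac{ab}{c}-p$, $v_2=\frac{a(1+a)b(1+b)}{2c(1+c)}-\frac{abp}{c}+\frac{p^2}{2}$, and for all integers $n\ge2$, \[ u_{n+1}=\frac{(a+n)(b+n)+p(c+2n)}{(n+1)(c+n)}u_n-\frac{p(a+b+2n+p-1)}{(n+1)(c+n)}u_{n-1}+\frac{p^2}{(n+1)(c+n)}u_{n-2}, \] \[ v_{n+1}=\frac{(a+n)(b+n)-p(c+2n)}{(n+1)(c+n)}v_n+\frac{p(a+b+2n-p-1)}{(n+1)(c+n)}v_{n-1}+\frac{p^2}{(n+1)(c+n)}v_{n-2}. \] That is: with $(u_n)$ and $(v_n)$ defined by these initial values and recurrences, the displayed expansion holds.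
   Context: For $a\in\mathbb{C}$, $(a)_n=a(a+1)\cdots(a+n-1)$ denotes the Pochhammer symbol, with $(a)_0=1$. For $a,b,c\in\mathbb{C}$ with $-c\notin\mathbb{N}\cup\{0\}$, the Gaussian hypergeometric function is $F(a,b;c;z)=\sum_{n=0}^\infty \frac{(a)_n(b)_n}{(c)_n\,n!}z^n$, $|z|<1$. *)

theory Defs
  imports "HOL-Analysis.Analysis"
begin

definition hyp2F1 :: "complex \<Rightarrow> complex \<Rightarrow> complex \<Rightarrow> complex \<Rightarrow> complex" where
  "hyp2F1 a b c z = (\<Sum>n. pochhammer a n * pochhammer b n / (pochhammer c n * fact n) * z ^ n)"

fun useq :: "complex \<Rightarrow> complex \<Rightarrow> complex \<Rightarrow> complex \<Rightarrow> nat \<Rightarrow> complex" where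
  "useq a b c p 0 = 1"
| "useq a b c p (Suc 0) = a * b / c + p"
| "useq a b c p (Suc (Suc 0)) =
     a * (1 + a) * b * (1 + b) / (2 * c * (1 + c)) + a * b * p / c + p ^ 2 / 2"
| "useq a b c p (Suc (Suc (Suc m))) =
     (let n = of_nat (Suc (Suc m)) :: complex in
       ((a + n) * (b + n) + p * (c + 2 * n)) / ((n + 1) * (c + n)) * useq a b c p (Suc (Suc m))
       - p * (a + b + 2 * n + p - 1) / ((n + 1) * (c + n)) * useq a b c p (Suc m)
       + p ^ 2 / ((n + 1) * (c + n)) * useq a b c p m)"

fun vseq :: "complex \<Rightarrow> complex \<Rightarrow> complex \<Rightarrow> complex \<Rightarrow> nat \<Rightarrow> complex" where
  "vseq a b c p 0 = 1"
| "vseq a b c p (Suc 0) = a * b / c - p"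
| "vseq a b c p (Suc (Suc 0)) =
     a * (1 + a) * b * (1 + b) / (2 * c * (1 + c)) - a * b * p / c + p ^ 2 / 2"
| "vseq a b c p (Suc (Suc (Suc m))) =
     (let n = of_nat (Suc (Suc m)) :: complex in
       ((a + n) * (b + n) - p * (c + 2 * n)) / ((n + 1) * (c + n)) * vseq a b c p (Suc (Suc m))
       + p * (a + b + 2 * n - p - 1) / ((n + 1) * (c + n)) * vseq a b c p (Suc m)
       + p ^ 2 / ((n + 1) * (c + n)) * vseq a b c p m)"

end

theory Submission
  imports Defs "HOL-Computational_Algebra.Formal_Power_Series"
begin

text \<open>
  The sequence \<open>u\<^sub>n\<close> is the coefficient sequence of \<open>e\<^sup>p\<^sup>z F(a,b;c;z)\<close>, and \<open>v\<^sub>n\<close> is the same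
  sequence with \<open>p\<close> replaced by \<open>-p\<close>; hence \<open>(u\<^sub>n - v\<^sub>n)/2\<close> are the coefficients of
  \<open>sinh(pz) F(a,b;c;z)\<close>. To identify the coefficients, note that \<open>U = e\<^sup>q\<^sup>z F\<close> satisfies the
  hypergeometric equation conjugated by \<open>e\<^sup>q\<^sup>z\<close>, a second order equation with polynomial
  coefficients of degree at most two, and comparing coefficients in it yields exactly the
  recurrence defining \<open>u\<^sub>n\<close>. Convergence for \<open>|z| < 1\<close> follows since \<open>F\<close> has radius of
  convergence at least 1 (ratio test) and the exponential series is entire.
\<close>

lemma tendsto_shifted_of_nat_ratio:
  fixes a c :: "'a :: real_normed_field"
  shows "(\<lambda>n. (a + of_nat n) / (c + of_nat n)) \<longlonglongrightarrow> 1"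
proof -
  have "(\<lambda>n. 1 + (a - c) / (c + of_nat n)) \<longlonglongrightarrow> 1 + 0"
    by (intro tendsto_add tendsto_const tendsto_divide_0[OF tendsto_const]
          tendsto_add_filterlim_at_infinity[OF tendsto_const] tendsto_of_nat)
  moreover have "eventually (\<lambda>n. 1 + (a - c) / (c + of_nat n) = (a + of_nat n) / (c + of_nat n)) sequentially"
  proof -
    have "eventually (\<lambda>n. c + of_nat n \<noteq> 0) sequentially"
      by (intro filterlim_at_infinity_imp_eventually_ne
            tendsto_add_filterlim_at_infinity[OF tendsto_const tendsto_of_nat])
    then show ?thesis by eventually_elim (auto simp: field_simps)
  qed
  ultimately show ?thesis by (simp add: tendsto_cong)
qed

lemma shifted_of_nat_product_neq_0:
  fixes c :: "'a :: {ring_char_0, ring_no_zero_divisors}"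
  assumes "\<forall>n::nat. c \<noteq> - of_nat n"
  shows "(of_nat n + 1) * (c + of_nat n) \<noteq> 0"
proof -
  have "(of_nat n + 1 :: 'a) = of_nat (Suc n)" by simp
  then show ?thesis using assms by (auto simp: add_eq_0_iff2 simp del: of_nat_Suc)
qed

definition hyp2F1_fps :: "'a :: field_char_0 \<Rightarrow> 'a \<Rightarrow> 'a \<Rightarrow> 'a fps" where
  "hyp2F1_fps a b c = Abs_fps (\<lambda>n. pochhammer a n * pochhammer b n / (pochhammer c n * fact n))"

lemma hyp2F1_fps_nth_Suc:
  fixes a b c :: "'a :: field_char_0"
  assumes "\<forall>n::nat. c \<noteq> - of_nat n"
  shows "(of_nat n + 1) * (c + of_nat n) * fps_nth (hyp2F1_fps a b c) (Suc n)
           = (a + of_nat n) * (b + of_nat n) * fps_nth (hyp2F1_fps a b c) n"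
proof -
  have "pochhammer c n \<noteq> 0" using assms by (auto simp: pochhammer_eq_0_iff)
  with shifted_of_nat_product_neq_0[OF assms, of n] show ?thesis
    unfolding hyp2F1_fps_def fps_nth_Abs_fps pochhammer_Suc fact_Suc of_nat_mult of_nat_Suc
    by (simp add: divide_simps ac_simps)
qed

lemma fps_conv_radius_hyp2F1_fps:
  fixes a b c :: "'a :: {real_normed_field, banach}"
  assumes "\<forall>n::nat. c \<noteq> - of_nat n"
  shows "fps_conv_radius (hyp2F1_fps a b c) \<ge> 1"
  unfolding fps_conv_radius_def
proof (rule conv_radius_geI_ex')
  fix r :: real
  assume "0 < r" "ereal r < 1"
  then have "r < 1" by simp
  define F where "F = fps_nth (hyp2F1_fps a b c)"
  define \<rho> where "\<rho> n = (a + of_nat n) * (b + of_nat n) / ((of_nat n + 1) * (c + of_nat n))" for n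
  have "(\<lambda>n. (a + of_nat n) / (of_nat n + 1)) \<longlonglongrightarrow> 1"
    using tendsto_shifted_of_nat_ratio[of a 1] by (simp add: add.commute)
  then have "\<rho> \<longlonglongrightarrow> 1 * 1"
    unfolding \<rho>_def times_divide_times_eq[symmetric]
    by (intro tendsto_mult tendsto_shifted_of_nat_ratio)
  then have "(\<lambda>n. norm (\<rho> n) * r) \<longlonglongrightarrow> norm (1 * 1 :: 'a) * r"
    by (intro tendsto_mult_right tendsto_norm)
  moreover have "norm (1 * 1 :: 'a) * r < (1 + r) / 2" using \<open>r < 1\<close> by simp
  ultimately have "eventually (\<lambda>n. norm (\<rho> n) * r < (1 + r) / 2) sequentially"
    by (rule order_tendstoD(2))
  then obtain N where N: "\<And>n. n \<ge> N \<Longrightarrow> norm (\<rho> n) * r < (1 + r) / 2"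
    unfolding eventually_sequentially by blast
  show "summable (\<lambda>n. F n * of_real r ^ n)"
  proof (rule summable_ratio_test)
    show "(1 + r) / 2 < 1" using \<open>r < 1\<close> by simp
  next
    fix n assume "n \<ge> N"
    have "F (Suc n) = \<rho> n * F n"
      using hyp2F1_fps_nth_Suc[OF assms, of n a b] shifted_of_nat_product_neq_0[OF assms, of n]
      unfolding F_def \<rho>_def by (simp add: eq_divide_eq mult_ac)
    then have "norm (F (Suc n) * of_real r ^ Suc n) = norm (\<rho> n) * r * norm (F n * of_real r ^ n)"
      using \<open>0 < r\<close> by (simp add: norm_mult norm_power)
    also have "\<dots> \<le> (1 + r) / 2 * norm (F n * of_real r ^ n)"
      using N[OF \<open>n \<ge> N\<close>] by (intro mult_right_mono) auto
    finally show "norm (F (Suc n) * of_real r ^ Suc n) \<le> (1 + r) / 2 * norm (F n * of_real r ^ n)" .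
  qed
qed

lemma eval_fps_hyp2F1_fps: "eval_fps (hyp2F1_fps a b c) z = hyp2F1 a b c z"
  by (simp add: eval_fps_def hyp2F1_fps_def hyp2F1_def)

definition hyp2F1_operator :: "'a :: comm_ring_1 \<Rightarrow> 'a \<Rightarrow> 'a \<Rightarrow> 'a fps \<Rightarrow> 'a fps" where
  "hyp2F1_operator a b c F =
     fps_X * (1 - fps_X) * fps_deriv (fps_deriv F)
     + (fps_const c - fps_const (a + b + 1) * fps_X) * fps_deriv F - fps_const (a * b) * F"

text \<open>The operator \<open>U \<mapsto> e\<^sup>q\<^sup>z L(e\<^sup>-\<^sup>q\<^sup>z U)\<close>, where \<open>L\<close> is \<^const>\<open>hyp2F1_operator\<close>.\<close>

definition exp_hyp2F1_operator :: "'a :: comm_ring_1 \<Rightarrow> 'a \<Rightarrow> 'a \<Rightarrow> 'a \<Rightarrow> 'a fps \<Rightarrow> 'a fps" where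
  "exp_hyp2F1_operator a b c q U =
     fps_X * (1 - fps_X) * fps_deriv (fps_deriv U)
     + (fps_const c - fps_const (a + b + 1 + 2 * q) * fps_X + fps_const (2 * q) * fps_X ^ 2) * fps_deriv U
     - (fps_const (a * b + q * c) - fps_const (q * (a + b + q + 1)) * fps_X
        + fps_const (q ^ 2) * fps_X ^ 2) * U"

lemma hyp2F1_operator_hyp2F1_fps:
  fixes a b c :: "'a :: field_char_0"
  assumes "\<forall>n::nat. c \<noteq> - of_nat n"
  shows "hyp2F1_operator a b c (hyp2F1_fps a b c) = 0"
proof (rule fps_ext)
  fix n
  show "fps_nth (hyp2F1_operator a b c (hyp2F1_fps a b c)) n = fps_nth 0 n"
    using hyp2F1_fps_nth_Suc[OF assms, of n a b] unfolding hyp2F1_operator_def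
    by (cases n) (simp_all add: algebra_simps fps_X_power_mult_nth)
qed

lemma exp_hyp2F1_operator_fps_exp_mult:
  fixes a b c q :: "'a :: field_char_0"
  shows "exp_hyp2F1_operator a b c q (fps_exp q * F) = fps_exp q * hyp2F1_operator a b c F"
proof -
  define U where "U = fps_exp q * F"
  have U': "fps_deriv U = fps_exp q * (fps_const q * F + fps_deriv F)"
    by (simp add: U_def algebra_simps)
  have U'': "fps_deriv (fps_deriv U) = fps_exp q *
      (fps_const q * fps_const q * F + 2 * fps_const q * fps_deriv F + fps_deriv (fps_deriv F))"
    unfolding U' by (simp add: algebra_simps mult_2)
  have fps_const_expand: "fps_const (a + b + 1) = fps_const a + fps_const b + 1"
    "fps_const (a + b + 1 + 2 * q) = fps_const a + fps_const b + 1 + 2 * fps_const q"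
    "fps_const (2 * q) = 2 * fps_const q" "fps_const (a * b) = fps_const a * fps_const b"
    "fps_const (a * b + q * c) = fps_const a * fps_const b + fps_const q * fps_const c"
    "fps_const (q * (a + b + q + 1)) = fps_const q * (fps_const a + fps_const b + fps_const q + 1)"
    "fps_const (q ^ 2) = fps_const q * fps_const q"
    by (simp_all add: numeral_fps_const power2_eq_square)
  show ?thesis
    unfolding exp_hyp2F1_operator_def hyp2F1_operator_def U_def[symmetric]
    unfolding U'' unfolding U' unfolding fps_const_expand U_def by algebra
qed

lemma fps_nth_Suc_if_exp_hyp2F1_operator_eq_0:
  fixes a b c q :: "'a :: comm_ring_1"
  assumes "exp_hyp2F1_operator a b c q U = 0" and "n \<ge> 2"
  shows "(of_nat n + 1) * (c + of_nat n) * fps_nth U (Suc n) =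
           ((a + of_nat n) * (b + of_nat n) + q * (c + 2 * of_nat n)) * fps_nth U n
           - q * (a + b + 2 * of_nat n + q - 1) * fps_nth U (n - 1) + q ^ 2 * fps_nth U (n - 2)"
proof -
  obtain m where n: "n = Suc (Suc m)" using \<open>n \<ge> 2\<close> by (metis add_2_eq_Suc le_Suc_ex)
  have "fps_nth (exp_hyp2F1_operator a b c q U) n = 0"
    using assms(1) by simp
  then show ?thesis
    unfolding n exp_hyp2F1_operator_def
    apply (simp add: ring_distribs mult.assoc fps_X_power_mult_nth del: power_Suc)
    apply (simp add: algebra_simps)
    done
qed

lemma useq_eq_fps_nth:
  assumes "\<forall>n::nat. c \<noteq> - of_nat n"
  shows "useq a b c q n = fps_nth (fps_exp q * hyp2F1_fps a b c) n"
  using assms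
proof (induction a b c q n rule: useq.induct)
  case (1 a b c q)
  then show ?case by (simp add: fps_mult_nth hyp2F1_fps_def)
next
  case (2 a b c q)
  then have "c \<noteq> 0" using "2.prems"[rule_format, of 0] by simp
  then show ?case by (simp add: fps_mult_nth hyp2F1_fps_def field_simps)
next
  case (3 a b c q)
  then have "c \<noteq> 0" "1 + c \<noteq> 0"
    using "3.prems"[rule_format, of 0] "3.prems"[rule_format, of 1] by (auto simp: add_eq_0_iff)
  then show ?case by (simp add: fps_mult_nth hyp2F1_fps_def field_simps numeral_2_eq_2 pochhammer_Suc)
next
  case (4 a b c q m)
  define U where "U = fps_nth (fps_exp q * hyp2F1_fps a b c)"
  define N :: complex where "N = of_nat (Suc (Suc m))"
  have "exp_hyp2F1_operator a b c q (fps_exp q * hyp2F1_fps a b c) = 0"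
    by (simp add: exp_hyp2F1_operator_fps_exp_mult hyp2F1_operator_hyp2F1_fps "4.prems")
  from fps_nth_Suc_if_exp_hyp2F1_operator_eq_0[OF this, of "Suc (Suc m)"]
  have "(N + 1) * (c + N) * U (Suc (Suc (Suc m))) =
      ((a + N) * (b + N) + q * (c + 2 * N)) * U (Suc (Suc m))
      - q * (a + b + 2 * N + q - 1) * U (Suc m) + q ^ 2 * U m"
    unfolding U_def N_def by simp
  moreover have "(N + 1) * (c + N) \<noteq> 0"
    using shifted_of_nat_product_neq_0[OF "4.prems"] unfolding N_def .
  ultimately have "U (Suc (Suc (Suc m))) =
      (((a + N) * (b + N) + q * (c + 2 * N)) * U (Suc (Suc m))
       - q * (a + b + 2 * N + q - 1) * U (Suc m) + q ^ 2 * U m) / ((N + 1) * (c + N))"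
    by (simp add: eq_divide_eq mult.commute)
  also have "\<dots> =
      ((a + N) * (b + N) + q * (c + 2 * N)) / ((N + 1) * (c + N)) * U (Suc (Suc m))
      - q * (a + b + 2 * N + q - 1) / ((N + 1) * (c + N)) * U (Suc m)
      + q ^ 2 / ((N + 1) * (c + N)) * U m"
    by (simp only: times_divide_eq_left flip: diff_divide_distrib add_divide_distrib)
  finally show ?case
    using 4 by (simp add: Let_def U_def N_def)
qed

lemma vseq_eq_useq_uminus: "vseq a b c p n = useq a b c (- p) n"
  by (induction a b c p n rule: vseq.induct)
     (simp_all add: Let_def diff_divide_distrib add_divide_distrib algebra_simps)

lemma useq_sums:
  fixes a b c q z :: complex
  assumes "\<forall>n::nat. c \<noteq> - of_nat n" and "norm z < 1"
  shows "(\<lambda>n. useq a b c q n * z ^ n) sums (exp (q * z) * hyp2F1 a b c z)"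
proof -
  have "ereal (norm z) < 1" using assms(2) by simp
  with fps_conv_radius_hyp2F1_fps[OF assms(1)]
  have F: "norm z < fps_conv_radius (hyp2F1_fps a b c)" by (rule order.strict_trans2[rotated])
  moreover have "fps_conv_radius (hyp2F1_fps a b c) \<le> fps_conv_radius (fps_exp q * hyp2F1_fps a b c)"
    using fps_conv_radius_mult[of "fps_exp q" "hyp2F1_fps a b c"] by simp
  ultimately have "norm z < fps_conv_radius (fps_exp q * hyp2F1_fps a b c)"
    by (rule less_le_trans)
  from sums_eval_fps[OF this] F show ?thesis
    by (simp add: useq_eq_fps_nth[OF assms(1)] eval_fps_mult eval_fps_hyp2F1_fps)
qed

theorem theorem3p2:
  fixes a b c p z :: complex
  assumes "\<forall>n::nat. c \<noteq> - of_nat n"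
    and "norm z < 1"
  shows "(\<lambda>n. (useq a b c p n - vseq a b c p n) / 2 * z ^ n) sums (sinh (p * z) * hyp2F1 a b c z)"
proof -
  have "(\<lambda>n. (useq a b c p n * z ^ n - useq a b c (- p) n * z ^ n) / 2) sums
      ((exp (p * z) * hyp2F1 a b c z - exp (- p * z) * hyp2F1 a b c z) / 2)"
    by (intro sums_divide sums_diff useq_sums assms)
  moreover have "(exp (p * z) * hyp2F1 a b c z - exp (- p * z) * hyp2F1 a b c z) / 2
      = sinh (p * z) * hyp2F1 a b c z"
    by (simp add: sinh_field_def algebra_simps diff_divide_distrib)
  moreover have "(\<lambda>n. (useq a b c p n * z ^ n - useq a b c (- p) n * z ^ n) / 2)
      = (\<lambda>n. (useq a b c p n - vseq a b c p n) / 2 * z ^ n)"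
    by (simp add: vseq_eq_useq_uminus fun_eq_iff algebra_simps diff_divide_distrib)
  ultimately show ?thesis by simp
qed

end
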